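(* Let $\lambda>0$ not be a fusion value, let $C_1,\dots,C_K$ be the clusters of the minimizer $\mathbf x^*$ of (P), and let $\boldsymbol\delta^a$ be a point in the relative interior of the set of $\boldsymbol\delta$-components of optimal solutions of (D-SOCP). Define $r:=\min\{\lambda-\|\boldsymbol\delta^a_{ll'}\|: l<l',\ l,l'\in C_k\text{ for some }k\}$ (over pairs in a common cluster). Then $r>0$. Moreover, if $\boldsymbol\delta$ satisfies $\|\boldsymbol\delta_{ij}-\boldsymbol\delta^a_{ij}\|\le p'\mu$ for all $i<j$, then $\|\boldsymbol\delta_{ij}\|\le\lambda-r+p'\mu$ for all $i<j$ in a common cluster.
   Context: Data: $n\ge2$, $d\ge1$, $\mathbf a_i\in\mathbb R^d$, $r_i>0$, $\lambda>0$. (P): minimize $\frac12\sum_ir_i\|\mathbf x_i-\mathbf a_i\|^2+\lambda\sum_{i<j}r_ir_j\|\mathbf x_i-\mathbf x_j\|$, minimizer $\mathbf x^*(\lambda)$, clusters = classes of $i\sim j\iff\mathbf x_i^*=\mathbf x_j^*$. $\lambda_0>0$ is a fusion value if some $i\ne j$ have $\mathbf x_i^*(\lambda_0)=\mathbf x_j^*(\lambda_0)$ but $\mathbf x_i^*(\lambda)\ne\mathbf x_j^*(\lambda)$ for all $\lambda<\lambda_0$. Antisymmetric notation $\mathbf v_{\langle ij\rangle}=\mathbf v_{ij}$ ($i<j$), $-\mathbf v_{ji}$ ($i>j$), $\mathbf 0$ ($i=j$). (D-SOCP): maximize $\sum_ir_i\mathbf a_i^T\boldsymbol\beta_i+\sum_ir_i\gamma_i$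 over $\boldsymbol\delta_{ij},\boldsymbol\beta_i\in\mathbb R^d$, $\gamma_i\in\mathbb R$ s.t. $\sum_jr_j\boldsymbol\delta_{\langle ij\rangle}+\boldsymbol\beta_i=\mathbf 0$, $\|\boldsymbol\delta_{ij}\|\le\lambda$, $1-\gamma_i\ge\|(\boldsymbol\beta_i,\gamma_i)\|$. $p'\ge0$, $\mu\ge0$ are real numbers. *)

theory Defs
  imports "HOL-Analysis.Analysis"
begin

text \<open>Index set: a finite linearly ordered type 'i (the indices 1..n); points live in
  a Euclidean space 'a (= R^d). Weights r_i are called w here.\<close>

definition primal_obj :: "('i::{finite,linorder} \<Rightarrow> 'a::euclidean_space) \<Rightarrow> ('i \<Rightarrow> real) \<Rightarrow> real \<Rightarrow> ('i \<Rightarrow> 'a) \<Rightarrow> real" where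
  "primal_obj a w lam x =
     (1/2) * (\<Sum>i\<in>UNIV. w i * (norm (x i - a i))\<^sup>2)
     + lam * (\<Sum>i\<in>UNIV. \<Sum>j\<in>{j. i < j}. w i * w j * norm (x i - x j))"

text \<open>The minimizer x*(lambda) of (P) (unique for lambda >= 0 by strict convexity).\<close>
definition xstar :: "('i::{finite,linorder} \<Rightarrow> 'a::euclidean_space) \<Rightarrow> ('i \<Rightarrow> real) \<Rightarrow> real \<Rightarrow> ('i \<Rightarrow> 'a)" where
  "xstar a w lam = (THE x. \<forall>y. primal_obj a w lam x \<le> primal_obj a w lam y)"

definition same_cluster :: "('i::{finite,linorder} \<Rightarrow> 'a::euclidean_space) \<Rightarrow> ('i \<Rightarrow> real) \<Rightarrow> real \<Rightarrow> 'i \<Rightarrow> 'i \<Rightarrow> bool" where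
  "same_cluster a w lam i j \<longleftrightarrow> xstar a w lam i = xstar a w lam j"

definition fusion_value :: "('i::{finite,linorder} \<Rightarrow> 'a::euclidean_space) \<Rightarrow> ('i \<Rightarrow> real) \<Rightarrow> real \<Rightarrow> bool" where
  "fusion_value a w lam0 \<longleftrightarrow> lam0 > 0 \<and>
     (\<exists>i j. i \<noteq> j \<and> xstar a w lam0 i = xstar a w lam0 j \<and>
        (\<forall>lam. 0 < lam \<and> lam < lam0 \<longrightarrow> xstar a w lam i \<noteq> xstar a w lam j))"

definition anti :: "(('a::real_normed_vector, 'i::{finite,linorder}) vec, 'i) vec \<Rightarrow> 'i \<Rightarrow> 'i \<Rightarrow> 'a" where
  "anti v i j = (if i < j then v$i$j else if j < i then - (v$j$i) else 0)"

text \<open>(D-SOCP). Only the entries delta$i$j with i < j are variables.\<close>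
definition dsocp_feasible :: "('i::{finite,linorder} \<Rightarrow> real) \<Rightarrow> real \<Rightarrow> (('a::euclidean_space, 'i) vec, 'i) vec \<Rightarrow> ('i \<Rightarrow> 'a) \<Rightarrow> ('i \<Rightarrow> real) \<Rightarrow> bool" where
  "dsocp_feasible w lam \<delta> \<beta> \<gamma> \<longleftrightarrow>
     (\<forall>i. (\<Sum>j\<in>UNIV. w j *\<^sub>R anti \<delta> i j) + \<beta> i = 0) \<and>
     (\<forall>i j. i < j \<longrightarrow> norm (\<delta>$i$j) \<le> lam) \<and>
     (\<forall>i. norm (\<beta> i, \<gamma> i) \<le> 1 - \<gamma> i)"

definition dsocp_obj :: "('i::{finite,linorder} \<Rightarrow> 'a::euclidean_space) \<Rightarrow> ('i \<Rightarrow> real) \<Rightarrow> ('i \<Rightarrow> 'a) \<Rightarrow> ('i \<Rightarrow> real) \<Rightarrow> real" where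
  "dsocp_obj a w \<beta> \<gamma> = (\<Sum>i\<in>UNIV. w i * (a i \<bullet> \<beta> i)) + (\<Sum>i\<in>UNIV. w i * \<gamma> i)"

definition dsocp_optimal :: "('i::{finite,linorder} \<Rightarrow> 'a::euclidean_space) \<Rightarrow> ('i \<Rightarrow> real) \<Rightarrow> real \<Rightarrow> (('a, 'i) vec, 'i) vec \<Rightarrow> ('i \<Rightarrow> 'a) \<Rightarrow> ('i \<Rightarrow> real) \<Rightarrow> bool" where
  "dsocp_optimal a w lam \<delta> \<beta> \<gamma> \<longleftrightarrow> dsocp_feasible w lam \<delta> \<beta> \<gamma> \<and>
     (\<forall>\<delta>' \<beta>' \<gamma>'. dsocp_feasible w lam \<delta>' \<beta>' \<gamma>' \<longrightarrow> dsocp_obj a w \<beta>' \<gamma>' \<le> dsocp_obj a w \<beta> \<gamma>)"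

text \<open>Set of delta-components of optimal solutions; the unused entries (i >= j) are
  normalized to 0 so that the set lives in the space of the variables delta_ij, i<j.\<close>
definition dsocp_delta_set :: "('i::{finite,linorder} \<Rightarrow> 'a::euclidean_space) \<Rightarrow> ('i \<Rightarrow> real) \<Rightarrow> real \<Rightarrow> ((('a, 'i) vec, 'i) vec) set" where
  "dsocp_delta_set a w lam = {\<delta>. (\<forall>i j. \<not> i < j \<longrightarrow> \<delta>$i$j = 0) \<and> (\<exists>\<beta> \<gamma>. dsocp_optimal a w lam \<delta> \<beta> \<gamma>)}"

definition cluster_pairs :: "('i::{finite,linorder} \<Rightarrow> 'a::euclidean_space) \<Rightarrow> ('i \<Rightarrow> real) \<Rightarrow> real \<Rightarrow> ('i \<times> 'i) set" where
  "cluster_pairs a w lam = {(l, l'). l < l' \<and> same_cluster a w lam l l'}"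

definition cluster_gap :: "('i::{finite,linorder} \<Rightarrow> 'a::euclidean_space) \<Rightarrow> ('i \<Rightarrow> real) \<Rightarrow> real \<Rightarrow> (('a, 'i) vec, 'i) vec \<Rightarrow> real" where
  "cluster_gap a w lam \<delta>a = Min ((\<lambda>(l, l'). lam - norm (\<delta>a$l$l')) ` cluster_pairs a w lam)"

end

theory Submission
  imports Defs
begin

text \<open>A dual vector \<open>\<delta>\<close> with \<open>norm \<delta>_ij \<le> \<lambda>\<close> whose induced primal point
  \<open>x_i = a_i + \<Sum>_j r_j \<delta>_<ij>\<close> satisfies the KKT condition \<open>\<delta>_ij \<bullet> (x_j - x_i) = \<lambda> norm (x_j - x_i)\<close>
  is optimal for (D-SOCP), and then \<open>x = x*(\<lambda>)\<close>. Such vectors exist even when the entries inside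
  the blocks of a partition are prescribed, as long as the prescribed entries keep \<open>x\<close> constant on
  blocks: maximize the dual objective over the compact convex set of block-consistent vectors and read
  off the KKT condition from the first-order optimality condition.

  Since \<open>\<lambda>\<close> is not a fusion value, a pair fused at \<open>\<lambda>\<close> is already fused at some \<open>\<lambda>' < \<lambda>\<close>.
  Prescribing an optimal dual of \<open>\<lambda>'\<close> inside the clusters of \<open>\<lambda>'\<close> gives an optimal dual of
  \<open>\<lambda>\<close> with \<open>norm \<delta>_ij \<le> \<lambda>' < \<lambda>\<close> on that pair. As \<open>norm \<delta>_ij \<le> \<lambda>\<close> on the whole optimal set,
  a point of its relative interior is strictly below \<open>\<lambda>\<close> there, so \<open>r > 0\<close>; the second claim
  is the triangle inequality.\<close>

lemma inner_le_of_norm_le: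
  fixes u v :: "'a::real_inner"
  shows "norm u \<le> lam \<Longrightarrow> u \<bullet> v \<le> lam * norm v"
  by (meson norm_cauchy_schwarz mult_right_mono norm_ge_zero order_trans)

lemma sgn_inner_self: "sgn v \<bullet> v = norm (v::'a::real_inner)"
  by (cases "v = 0") (simp_all add: sgn_div_norm power2_norm_eq_inner[symmetric] power2_eq_square)

lemma eq_scaleR_sgn_if_inner_eq:
  fixes u v :: "'a::real_inner"
  assumes "norm u \<le> lam" "u \<bullet> v = lam * norm v" "v \<noteq> 0"
  shows "u = lam *\<^sub>R sgn v"
proof -
  have s: "u \<bullet> sgn v = lam" using assms by (simp add: sgn_div_norm)
  have n: "norm (sgn v) = 1" using assms(3) by (simp add: norm_sgn)
  have "(norm (u - lam *\<^sub>R sgn v))\<^sup>2 = (norm u)\<^sup>2 - 2 * lam * (u \<bullet> sgn v) + lam\<^sup>2 * (norm (sgn v))\<^sup>2"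
    by (simp only: power2_norm_eq_inner)
      (simp add: inner_diff_left inner_diff_right inner_commute algebra_simps power2_eq_square)
  also have "\<dots> = (norm u)\<^sup>2 - lam\<^sup>2" unfolding s n by (simp add: power2_eq_square)
  also have "\<dots> \<le> 0" using assms(1) by (simp add: power_mono)
  finally show ?thesis by simp
qed

lemma le_of_norm_Pair_le:
  fixes b :: "'a::real_normed_vector"
  assumes "norm (b, g) \<le> 1 - g"
  shows "g \<le> (1 - (norm b)\<^sup>2) / 2"
proof -
  have "sqrt ((norm b)\<^sup>2 + g\<^sup>2) \<le> 1 - g" using assms by (simp add: norm_Pair)
  then have "(norm b)\<^sup>2 + g\<^sup>2 \<le> (1 - g)\<^sup>2" by (rule sqrt_le_D)
  then show ?thesis by (simp add: power2_eq_square algebra_simps)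
qed

lemma norm_Pair_half_one_minus_sq:
  fixes b :: "'a::real_normed_vector"
  shows "norm (b, (1 - (norm b)\<^sup>2) / 2) = (1 + (norm b)\<^sup>2) / 2"
proof -
  have "(norm b)\<^sup>2 + ((1 - (norm b)\<^sup>2) / 2)\<^sup>2 = ((1 + (norm b)\<^sup>2) / 2)\<^sup>2"
    by (simp add: power2_eq_square field_simps)
  then show ?thesis
    unfolding norm_Pair real_norm_def power2_abs by (intro real_sqrt_unique) auto
qed

lemma nonpos_if_le_mult_small:
  fixes L Q :: real
  assumes "\<And>t. 0 < t \<Longrightarrow> t \<le> 1 \<Longrightarrow> L \<le> t * Q"
  shows "L \<le> 0"
proof (rule field_le_epsilon)
  fix e :: real assume e: "0 < e"
  define t where "t = min 1 (e / (\<bar>Q\<bar> + 1))"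
  have t: "0 < t" "t \<le> 1" using e by (auto simp: t_def)
  have "t * Q \<le> t * \<bar>Q\<bar>" using t by (simp add: mult_left_mono)
  also have "\<dots> \<le> e / (\<bar>Q\<bar> + 1) * \<bar>Q\<bar>" by (intro mult_right_mono) (auto simp: t_def)
  also have "\<dots> \<le> e" using e by (simp add: field_simps)
  finally show "L \<le> 0 + e" using assms[OF t] by simp
qed

lemma sum_pairs_split:
  fixes g :: "'i::{finite,linorder} \<Rightarrow> 'i \<Rightarrow> 'b::comm_monoid_add"
  shows "(\<Sum>i\<in>UNIV. \<Sum>j\<in>UNIV. g i j) = (\<Sum>i\<in>UNIV. \<Sum>j\<in>{j. i < j}. g i j + g j i) + (\<Sum>i\<in>UNIV. g i i)"
proof -
  have row: "(\<Sum>j\<in>UNIV. g i j) = (\<Sum>j\<in>{j. i < j}. g i j) + (\<Sum>j\<in>{j. j < i}. g i j) + g i i" for i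
  proof -
    have "UNIV = {j. i < j} \<union> {j. j < i} \<union> {i}" by auto
    then have "(\<Sum>j\<in>UNIV. g i j) = (\<Sum>j\<in>{j. i < j} \<union> {j. j < i} \<union> {i}. g i j)" by simp
    also have "\<dots> = (\<Sum>j\<in>{j. i < j}. g i j) + (\<Sum>j\<in>{j. j < i}. g i j) + g i i"
      by (subst sum.union_disjoint, auto)+
    finally show ?thesis .
  qed
  have "(\<Sum>i\<in>UNIV. \<Sum>j\<in>{j. j < i}. g i j) = (\<Sum>j\<in>UNIV. \<Sum>i\<in>{i. j < i}. g i j)"
    using sum.swap_restrict[of UNIV UNIV g "\<lambda>i j. j < i"] by simp
  then show ?thesis
    unfolding row sum.distrib by (simp add: add_ac)
qed

lemma sum_less_pairs_nonneg_eq_0: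
  fixes f :: "'i::{finite,linorder} \<Rightarrow> 'i \<Rightarrow> real"
  assumes nonneg: "\<And>i j. i < j \<Longrightarrow> 0 \<le> f i j"
    and le: "(\<Sum>i\<in>UNIV. \<Sum>j\<in>{j. i < j}. f i j) \<le> 0" and ij: "i < j"
  shows "f i j = 0"
proof -
  have rows: "\<forall>i\<in>UNIV. 0 \<le> (\<Sum>j\<in>{j. i < j}. f i j)" using nonneg by (auto intro: sum_nonneg)
  then have "(\<Sum>i\<in>UNIV. \<Sum>j\<in>{j. i < j}. f i j) = 0" using le by (meson antisym sum_nonneg)
  then have "(\<Sum>j\<in>{j. i < j}. f i j) = 0" using rows by (simp add: sum_nonneg_eq_0_iff)
  then show ?thesis using sum_nonneg_eq_0_iff[of "{j. i < j}" "f i"] nonneg ij by auto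
qed

lemma weighted_sum_sq_nonpos_eq_0:
  fixes v :: "'i::finite \<Rightarrow> 'a::real_normed_vector"
  assumes w: "\<forall>i. w i > 0" and le: "(\<Sum>i\<in>UNIV. w i * (norm (v i))\<^sup>2) \<le> 0"
  shows "v i = 0"
proof -
  have nonneg: "\<forall>i\<in>UNIV. 0 \<le> w i * (norm (v i))\<^sup>2" using w by (simp add: less_imp_le)
  then have "(\<Sum>i\<in>UNIV. w i * (norm (v i))\<^sup>2) = 0" using le by (meson antisym sum_nonneg)
  then have "w i * (norm (v i))\<^sup>2 = 0" using nonneg by (simp add: sum_nonneg_eq_0_iff)
  then have "(norm (v i))\<^sup>2 = 0" using w by (metis less_irrefl mult_eq_0_iff)
  then show ?thesis by simp
qed

lemma norm_le_sum_norm_vec_nth: "norm (x :: ('b::real_normed_vector, 'n::finite) vec) \<le> (\<Sum>i\<in>UNIV. norm (x$i))"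
  by (simp add: norm_vec_def L2_set_le_sum)

lemma convex_on_norm_vec_nth_nth:
  fixes i :: "'m::finite" and j :: "'n::finite"
  shows "convex_on UNIV (\<lambda>\<delta> :: (('a::real_normed_vector, 'n) vec, 'm) vec. norm (\<delta>$i$j))"
proof (rule convex_onI)
  fix t :: real and x y :: "(('a, 'n) vec, 'm) vec"
  assume "0 < t" "t < 1"
  then show "norm (((1 - t) *\<^sub>R x + t *\<^sub>R y)$i$j) \<le> (1 - t) * norm (x$i$j) + t * norm (y$i$j)"
    using norm_triangle_ineq[of "(1 - t) *\<^sub>R x$i$j" "t *\<^sub>R y$i$j"] by simp
qed simp

text \<open>A point of the relative interior can be pushed a little beyond itself, away from \<open>y\<close>;
  convexity of \<open>g\<close> along that segment gives the strict inequality.\<close>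
lemma convex_on_lt_in_rel_interior:
  fixes S :: "'a::euclidean_space set"
  assumes g: "convex_on UNIV g" and le: "\<forall>z\<in>S. g z \<le> m" and y: "y \<in> S" "g y < m"
    and x: "x \<in> rel_interior S"
  shows "g x < m"
proof -
  obtain e where e: "0 < e" and sub: "cball x e \<inter> affine hull S \<subseteq> S" and xS: "x \<in> S"
    using x mem_rel_interior_cball by blast
  define d where "d = norm (x - y) + 1"
  have d: "0 < d" by (simp add: d_def add_nonneg_pos)
  define t where "t = e / d"
  have t: "0 < t" using e d by (simp add: t_def)
  define z where "z = (1 + t) *\<^sub>R x + (- t) *\<^sub>R y"
  have "z \<in> affine hull S"
    unfolding z_def by (rule mem_affine[OF affine_affine_hull hull_inc[OF xS] hull_inc[OF y(1)]]) simp
  moreover have "dist x z \<le> e"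
  proof -
    have "x - z = t *\<^sub>R (y - x)" by (simp add: z_def algebra_simps)
    then have "dist x z = t * norm (x - y)" using t by (simp add: dist_norm norm_minus_commute)
    also have "\<dots> \<le> t * d" using t by (simp add: d_def)
    also have "\<dots> = e" using d by (simp add: t_def)
    finally show ?thesis .
  qed
  ultimately have "g z \<le> m" using sub le by auto
  define s where "s = t / (1 + t)"
  have s: "0 < s" "s < 1" using t by (auto simp: s_def)
  have "x = (1 / (1 + t)) *\<^sub>R ((1 + t) *\<^sub>R x)" using t by simp
  also have "(1 + t) *\<^sub>R x = z + t *\<^sub>R y" by (simp add: z_def algebra_simps)
  also have "(1 / (1 + t)) *\<^sub>R (z + t *\<^sub>R y) = (1 - s) *\<^sub>R z + s *\<^sub>R y"
    using t by (simp add: s_def scaleR_add_right field_simps)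
  finally have "g x \<le> (1 - s) * g z + s * g y" using convex_onD[OF g, of s z y] s by simp
  also have "\<dots> < (1 - s) * m + s * m"
    using s \<open>g z \<le> m\<close> y(2) by (intro add_le_less_mono mult_left_mono mult_strict_left_mono) auto
  finally show ?thesis by (simp add: algebra_simps)
qed

section \<open>Dual objective and KKT vectors\<close>

lemma anti_same [simp]: "anti v i i = 0"
  by (simp add: anti_def)

lemma anti_add: "anti (u + v) i j = anti u i j + anti v i j"
  by (simp add: anti_def)

lemma anti_scaleR: "anti (t *\<^sub>R v) i j = t *\<^sub>R anti v i j"
  by (simp add: anti_def)

lemma continuous_on_anti [continuous_intros]: "continuous_on S (\<lambda>\<delta>. anti \<delta> i j)"
  by (cases "i < j"; cases "j < i") (auto simp: anti_def intro!: continuous_intros)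

definition dual_sum :: "('i::{finite,linorder} \<Rightarrow> real) \<Rightarrow> (('a::euclidean_space, 'i) vec, 'i) vec \<Rightarrow> 'i \<Rightarrow> 'a" where
  "dual_sum w \<delta> i = (\<Sum>j\<in>UNIV. w j *\<^sub>R anti \<delta> i j)"

definition primal_point :: "('i::{finite,linorder} \<Rightarrow> 'a::euclidean_space) \<Rightarrow> ('i \<Rightarrow> real) \<Rightarrow> (('a, 'i) vec, 'i) vec \<Rightarrow> 'i \<Rightarrow> 'a" where
  "primal_point a w \<delta> i = a i + dual_sum w \<delta> i"

definition dual_gamma :: "('i::{finite,linorder} \<Rightarrow> real) \<Rightarrow> (('a::euclidean_space, 'i) vec, 'i) vec \<Rightarrow> 'i \<Rightarrow> real" where
  "dual_gamma w \<delta> i = (1 - (norm (dual_sum w \<delta> i))\<^sup>2) / 2"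

text \<open>The equality constraints of (D-SOCP) force \<open>\<beta> = - dual_sum w \<delta>\<close>, and \<open>dual_gamma\<close> is the
  largest \<open>\<gamma>\<close> allowed by the cone constraint, so this is the dual objective as a function of \<open>\<delta>\<close> alone.\<close>
definition dual_fun :: "('i::{finite,linorder} \<Rightarrow> 'a::euclidean_space) \<Rightarrow> ('i \<Rightarrow> real) \<Rightarrow> (('a, 'i) vec, 'i) vec \<Rightarrow> real" where
  "dual_fun a w \<delta> = dsocp_obj a w (\<lambda>i. - dual_sum w \<delta> i) (dual_gamma w \<delta>)"

definition kkt :: "('i::{finite,linorder} \<Rightarrow> 'a::euclidean_space) \<Rightarrow> ('i \<Rightarrow> real) \<Rightarrow> real \<Rightarrow> (('a, 'i) vec, 'i) vec \<Rightarrow> bool" where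
  "kkt a w lam \<delta> \<longleftrightarrow> (\<forall>i j. i < j \<longrightarrow> norm (\<delta>$i$j) \<le> lam \<and>
      \<delta>$i$j \<bullet> (primal_point a w \<delta> j - primal_point a w \<delta> i)
        = lam * norm (primal_point a w \<delta> j - primal_point a w \<delta> i))"

lemma dual_sum_add_scaleR: "dual_sum w (\<delta> + t *\<^sub>R E) i = dual_sum w \<delta> i + t *\<^sub>R dual_sum w E i"
  by (simp add: dual_sum_def anti_add anti_scaleR scaleR_sum_right sum.distrib algebra_simps)

lemma sum_inner_dual_sum:
  "(\<Sum>i\<in>UNIV. w i * (y i \<bullet> dual_sum w \<delta> i))
     = (\<Sum>i\<in>UNIV. \<Sum>j\<in>{j. i < j}. w i * w j * (\<delta>$i$j \<bullet> (y i - y j)))"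
proof -
  have "(\<Sum>i\<in>UNIV. w i * (y i \<bullet> dual_sum w \<delta> i)) = (\<Sum>i\<in>UNIV. \<Sum>j\<in>UNIV. w i * w j * (y i \<bullet> anti \<delta> i j))"
    unfolding dual_sum_def by (simp add: inner_sum_right sum_distrib_left mult.assoc)
  also have "\<dots> = (\<Sum>i\<in>UNIV. \<Sum>j\<in>{j. i < j}. w i * w j * (y i \<bullet> anti \<delta> i j) + w j * w i * (y j \<bullet> anti \<delta> j i))"
    by (subst sum_pairs_split) simp
  also have "\<dots> = (\<Sum>i\<in>UNIV. \<Sum>j\<in>{j. i < j}. w i * w j * (\<delta>$i$j \<bullet> (y i - y j)))"
    by (intro sum.cong refl) (auto simp: anti_def inner_diff_right inner_commute algebra_simps)
  finally show ?thesis .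
qed

text \<open>Completing the square: for every \<open>y\<close>, the dual objective splits into primal-like terms at \<open>y\<close>
  minus a penalty for the distance of \<open>y\<close> to the primal point induced by \<open>\<delta>\<close>.\<close>
lemma dual_fun_eq:
  "dual_fun a w \<delta> = sum w UNIV / 2 + (1/2) * (\<Sum>i\<in>UNIV. w i * (norm (y i - a i))\<^sup>2)
     - (1/2) * (\<Sum>i\<in>UNIV. w i * (norm (y i - primal_point a w \<delta> i))\<^sup>2)
     + (\<Sum>i\<in>UNIV. \<Sum>j\<in>{j. i < j}. w i * w j * (\<delta>$i$j \<bullet> (y j - y i)))"
proof -
  let ?s = "dual_sum w \<delta>"
  have pointwise: "a i \<bullet> (- ?s i) + (1 - (norm (?s i))\<^sup>2) / 2
      = 1/2 + (norm (y i - a i))\<^sup>2 / 2 - (norm (y i - primal_point a w \<delta> i))\<^sup>2 / 2 - y i \<bullet> ?s i" for i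
    by (simp add: primal_point_def power2_norm_eq_inner inner_diff_left inner_diff_right
        inner_add_left inner_add_right inner_commute field_simps)
  have "dual_fun a w \<delta> = (\<Sum>i\<in>UNIV. w i * (1/2 + (norm (y i - a i))\<^sup>2 / 2
      - (norm (y i - primal_point a w \<delta> i))\<^sup>2 / 2 - y i \<bullet> ?s i))"
    unfolding dual_fun_def dsocp_obj_def dual_gamma_def pointwise[symmetric]
    by (simp add: sum.distrib[symmetric] algebra_simps)
  also have "\<dots> = sum w UNIV / 2 + (1/2) * (\<Sum>i\<in>UNIV. w i * (norm (y i - a i))\<^sup>2)
      - (1/2) * (\<Sum>i\<in>UNIV. w i * (norm (y i - primal_point a w \<delta> i))\<^sup>2)
      - (\<Sum>i\<in>UNIV. w i * (y i \<bullet> ?s i))"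
    by (simp add: sum.distrib sum_subtractf sum_distrib_left sum_divide_distrib algebra_simps)
  also have "(\<Sum>i\<in>UNIV. w i * (y i \<bullet> ?s i)) = - (\<Sum>i\<in>UNIV. \<Sum>j\<in>{j. i < j}. w i * w j * (\<delta>$i$j \<bullet> (y j - y i)))"
    unfolding sum_inner_dual_sum by (simp add: sum_negf[symmetric] inner_diff_right algebra_simps)
  finally show ?thesis by simp
qed

lemma dual_fun_le_primal:
  fixes \<delta> :: "(('a::euclidean_space, 'i::{finite,linorder}) vec, 'i) vec"
  assumes w: "\<forall>i. w i > 0" and bound: "\<forall>i j. i < j \<longrightarrow> norm (\<delta>$i$j) \<le> lam"
  shows "dual_fun a w \<delta> + (1/2) * (\<Sum>i\<in>UNIV. w i * (norm (y i - primal_point a w \<delta> i))\<^sup>2)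
           \<le> sum w UNIV / 2 + primal_obj a w lam y"
proof -
  have "(\<Sum>i\<in>UNIV. \<Sum>j\<in>{j. i < j}. w i * w j * (\<delta>$i$j \<bullet> (y j - y i)))
      \<le> (\<Sum>i\<in>UNIV. \<Sum>j\<in>{j. i < j}. w i * w j * (lam * norm (y i - y j)))"
  proof (intro sum_mono mult_left_mono)
    fix i j :: 'i assume "j \<in> {j. i < j}"
    then have "\<delta>$i$j \<bullet> (y j - y i) \<le> lam * norm (y j - y i)"
      using bound by (intro inner_le_of_norm_le) auto
    then show "\<delta>$i$j \<bullet> (y j - y i) \<le> lam * norm (y i - y j)" by (simp add: norm_minus_commute)
    show "0 \<le> w i * w j" using w by (simp add: less_imp_le)
  qed
  then show ?thesis
    unfolding dual_fun_eq[where y = y] primal_obj_def by (simp add: sum_distrib_left algebra_simps)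
qed

lemma dual_fun_kkt:
  assumes "kkt a w lam \<delta>"
  shows "dual_fun a w \<delta> = sum w UNIV / 2 + primal_obj a w lam (primal_point a w \<delta>)"
proof -
  let ?x = "primal_point a w \<delta>"
  have "(\<Sum>i\<in>UNIV. \<Sum>j\<in>{j. i < j}. w i * w j * (\<delta>$i$j \<bullet> (?x j - ?x i)))
      = (\<Sum>i\<in>UNIV. \<Sum>j\<in>{j. i < j}. w i * w j * (lam * norm (?x i - ?x j)))"
    using assms unfolding kkt_def by (intro sum.cong refl) (auto simp: norm_minus_commute)
  then show ?thesis
    unfolding dual_fun_eq[where y = ?x] primal_obj_def by (simp add: sum_distrib_left algebra_simps)
qed

lemma dsocp_feasible_dual:
  assumes "\<forall>i j. i < j \<longrightarrow> norm (\<delta>$i$j) \<le> lam"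
  shows "dsocp_feasible w lam \<delta> (\<lambda>i. - dual_sum w \<delta> i) (dual_gamma w \<delta>)"
proof -
  have "norm (- dual_sum w \<delta> i, dual_gamma w \<delta> i) = 1 - dual_gamma w \<delta> i" for i
    using norm_Pair_half_one_minus_sq[of "- dual_sum w \<delta> i"] by (simp add: dual_gamma_def field_simps)
  then show ?thesis
    using assms by (simp add: dsocp_feasible_def dual_sum_def[symmetric])
qed

lemma dsocp_obj_le_dual_fun:
  assumes feas: "dsocp_feasible w lam \<delta> \<beta> \<gamma>" and w: "\<forall>i. w i > 0"
  shows "dsocp_obj a w \<beta> \<gamma> \<le> dual_fun a w \<delta>"
proof -
  have \<beta>: "\<beta> = (\<lambda>i. - dual_sum w \<delta> i)"
    using feas by (auto simp: dsocp_feasible_def dual_sum_def eq_neg_iff_add_eq_0 add.commute)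
  have "\<gamma> i \<le> dual_gamma w \<delta> i" for i
    using feas le_of_norm_Pair_le by (fastforce simp: dsocp_feasible_def dual_gamma_def \<beta>)
  then show ?thesis
    unfolding dual_fun_def dsocp_obj_def \<beta> using w
    by (intro add_left_mono sum_mono mult_left_mono) (auto simp: less_imp_le)
qed

lemma dsocp_optimal_of_kkt:
  assumes w: "\<forall>i. w i > 0" and K: "kkt a w lam \<delta>"
  shows "dsocp_optimal a w lam \<delta> (\<lambda>i. - dual_sum w \<delta> i) (dual_gamma w \<delta>)"
proof -
  have "dsocp_obj a w \<beta> \<gamma> \<le> dual_fun a w \<delta>" if feas: "dsocp_feasible w lam \<delta>' \<beta> \<gamma>" for \<delta>' \<beta> \<gamma>
  proof -
    have bound': "\<forall>i j. i < j \<longrightarrow> norm (\<delta>'$i$j) \<le> lam" using feas by (simp add: dsocp_feasible_def)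
    moreover have "0 \<le> (\<Sum>i\<in>UNIV. w i * (norm (primal_point a w \<delta> i - primal_point a w \<delta>' i))\<^sup>2)"
      using w by (intro sum_nonneg mult_nonneg_nonneg) (auto simp: less_imp_le)
    ultimately have "dual_fun a w \<delta>' \<le> sum w UNIV / 2 + primal_obj a w lam (primal_point a w \<delta>)"
      using dual_fun_le_primal[OF w bound', of a "primal_point a w \<delta>"] by linarith
    then show ?thesis using dsocp_obj_le_dual_fun[OF feas w, of a] dual_fun_kkt[OF K] by linarith
  qed
  moreover have "\<forall>i j. i < j \<longrightarrow> norm (\<delta>$i$j) \<le> lam" using K by (simp add: kkt_def)
  ultimately show ?thesis
    by (auto simp: dsocp_optimal_def dual_fun_def intro: dsocp_feasible_dual)
qed

lemma xstar_eq_primal_point: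
  assumes w: "\<forall>i. w i > 0" and K: "kkt a w lam \<delta>"
  shows "xstar a w lam = primal_point a w \<delta>"
proof -
  let ?x = "primal_point a w \<delta>"
  have bound: "\<forall>i j. i < j \<longrightarrow> norm (\<delta>$i$j) \<le> lam" using K by (simp add: kkt_def)
  have gap: "primal_obj a w lam ?x + (1/2) * (\<Sum>i\<in>UNIV. w i * (norm (y i - ?x i))\<^sup>2) \<le> primal_obj a w lam y" for y
    using dual_fun_le_primal[OF w bound, of a y] dual_fun_kkt[OF K] by linarith
  have nonneg: "0 \<le> (\<Sum>i\<in>UNIV. w i * (norm (y i - ?x i))\<^sup>2)" for y
    using w by (simp add: sum_nonneg less_imp_le)
  show ?thesis
    unfolding xstar_def
  proof (rule the_equality)
    show "\<forall>y. primal_obj a w lam ?x \<le> primal_obj a w lam y"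
    proof
      fix y
      show "primal_obj a w lam ?x \<le> primal_obj a w lam y" using gap[of y] nonneg[of y] by linarith
    qed
  next
    fix z assume "\<forall>y. primal_obj a w lam z \<le> primal_obj a w lam y"
    then have "primal_obj a w lam z \<le> primal_obj a w lam ?x" by blast
    then have "(\<Sum>i\<in>UNIV. w i * (norm (z i - ?x i))\<^sup>2) \<le> 0" using gap[of z] by linarith
    then show "z = ?x" using weighted_sum_sq_nonpos_eq_0[OF w] by fastforce
  qed
qed

lemma dual_fun_line:
  fixes \<delta> E :: "(('a::euclidean_space, 'i::{finite,linorder}) vec, 'i) vec"
  shows "dual_fun a w (\<delta> + t *\<^sub>R E) = dual_fun a w \<delta>
     + t * (\<Sum>i\<in>UNIV. \<Sum>j\<in>{j. i < j}. w i * w j * (E$i$j \<bullet> (primal_point a w \<delta> j - primal_point a w \<delta> i)))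
     - t\<^sup>2 / 2 * (\<Sum>i\<in>UNIV. w i * (norm (dual_sum w E i))\<^sup>2)"
proof -
  let ?x = "primal_point a w \<delta>"
  have "(norm (?x i - primal_point a w (\<delta> + t *\<^sub>R E) i))\<^sup>2 = t\<^sup>2 * (norm (dual_sum w E i))\<^sup>2" for i
    by (simp add: primal_point_def dual_sum_add_scaleR power_mult_distrib)
  then have quadratic: "(\<Sum>i\<in>UNIV. w i * (norm (?x i - primal_point a w (\<delta> + t *\<^sub>R E) i))\<^sup>2)
      = t\<^sup>2 * (\<Sum>i\<in>UNIV. w i * (norm (dual_sum w E i))\<^sup>2)"
    by (simp add: sum_distrib_left mult.left_commute)
  have linear: "(\<Sum>i\<in>UNIV. \<Sum>j\<in>{j. i < j}. w i * w j * ((\<delta> + t *\<^sub>R E)$i$j \<bullet> (?x j - ?x i)))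
      = (\<Sum>i\<in>UNIV. \<Sum>j\<in>{j. i < j}. w i * w j * (\<delta>$i$j \<bullet> (?x j - ?x i)))
        + t * (\<Sum>i\<in>UNIV. \<Sum>j\<in>{j. i < j}. w i * w j * (E$i$j \<bullet> (?x j - ?x i)))"
    by (simp add: inner_add_left distrib_left sum.distrib sum_distrib_left mult.left_commute)
  show ?thesis
    unfolding dual_fun_eq[where \<delta> = "\<delta> + t *\<^sub>R E" and y = ?x] dual_fun_eq[where \<delta> = \<delta> and y = ?x]
      quadratic linear
    by simp
qed

lemma dual_fun_first_order:
  assumes "\<And>t. 0 < t \<Longrightarrow> t \<le> 1 \<Longrightarrow> dual_fun a w (\<delta> + t *\<^sub>R E) \<le> dual_fun a w \<delta>"
  shows "(\<Sum>i\<in>UNIV. \<Sum>j\<in>{j. i < j}. w i * w j * (E$i$j \<bullet> (primal_point a w \<delta> j - primal_point a w \<delta> i))) \<le> 0"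
proof (rule nonpos_if_le_mult_small)
  fix t :: real assume t: "0 < t" "t \<le> 1"
  let ?L = "\<Sum>i\<in>UNIV. \<Sum>j\<in>{j. i < j}. w i * w j * (E$i$j \<bullet> (primal_point a w \<delta> j - primal_point a w \<delta> i))"
  let ?Q = "\<Sum>i\<in>UNIV. w i * (norm (dual_sum w E i))\<^sup>2"
  have "t * ?L \<le> t * (t * ?Q / 2)"
    using assms[OF t] dual_fun_line[of a w \<delta> t E] by (simp add: power2_eq_square)
  then show "?L \<le> t * (?Q / 2)" using t by simp
qed

text \<open>The ascent direction tested in the first-order optimality condition.\<close>
definition aligned_dual :: "real \<Rightarrow> ('i::{finite,linorder} \<Rightarrow> 'a::real_normed_vector) \<Rightarrow> (('a, 'i) vec, 'i) vec \<Rightarrow> (('a, 'i) vec, 'i) vec" where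
  "aligned_dual lam x \<delta> = (\<chi> k l. if k < l \<and> x k \<noteq> x l then lam *\<^sub>R sgn (x l - x k) else \<delta>$k$l)"

lemma anti_aligned_dual:
  "anti (aligned_dual lam x \<delta>) k l = (if x k \<noteq> x l then lam *\<^sub>R sgn (x l - x k) else anti \<delta> k l)"
proof -
  have "sgn (x k - x l) = - sgn (x l - x k)" by (metis minus_diff_eq sgn_minus)
  then show ?thesis by (auto simp: anti_def aligned_dual_def)
qed

lemma kkt_of_first_order:
  fixes a :: "'i::{finite,linorder} \<Rightarrow> 'a::euclidean_space" and w :: "'i \<Rightarrow> real"
    and \<delta> :: "(('a, 'i) vec, 'i) vec"
  defines "x \<equiv> primal_point a w \<delta>"
  assumes w: "\<forall>i. w i > 0" and bound: "\<forall>i j. i < j \<longrightarrow> norm (\<delta>$i$j) \<le> lam"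
    and first_order: "(\<Sum>i\<in>UNIV. \<Sum>j\<in>{j. i < j}.
        w i * w j * ((aligned_dual lam x \<delta> - \<delta>)$i$j \<bullet> (x j - x i))) \<le> 0"
  shows "kkt a w lam \<delta>"
proof -
  have aligned: "aligned_dual lam x \<delta> $i$j \<bullet> (x j - x i) = lam * norm (x j - x i)" if "i < j" for i j
    using that by (cases "x i = x j") (simp_all add: aligned_dual_def sgn_inner_self)
  then have gap: "(aligned_dual lam x \<delta> - \<delta>)$i$j \<bullet> (x j - x i) = lam * norm (x j - x i) - \<delta>$i$j \<bullet> (x j - x i)"
    if "i < j" for i j
    using that by (simp add: inner_diff_left)
  have nonneg: "0 \<le> w i * w j * ((aligned_dual lam x \<delta> - \<delta>)$i$j \<bullet> (x j - x i))" if "i < j" for i j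
  proof -
    have "\<delta>$i$j \<bullet> (x j - x i) \<le> lam * norm (x j - x i)"
      using bound that by (intro inner_le_of_norm_le) auto
    then show ?thesis unfolding gap[OF that] using w by (simp add: less_imp_le)
  qed
  have "\<delta>$i$j \<bullet> (x j - x i) = lam * norm (x j - x i)" if "i < j" for i j
  proof -
    have "w i * w j * ((aligned_dual lam x \<delta> - \<delta>)$i$j \<bullet> (x j - x i)) = 0"
      using sum_less_pairs_nonneg_eq_0[OF nonneg first_order that] by simp
    then show ?thesis unfolding gap[OF that] using w by (metis less_irrefl mult_eq_0_iff right_minus_eq)
  qed
  then show ?thesis using bound by (simp add: kkt_def x_def)
qed

lemma anti_eq_of_kkt:
  assumes K: "kkt a w lam \<delta>" and apart: "primal_point a w \<delta> k \<noteq> primal_point a w \<delta> l"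
  shows "anti \<delta> k l = lam *\<^sub>R sgn (primal_point a w \<delta> l - primal_point a w \<delta> k)"
proof -
  let ?x = "primal_point a w \<delta>"
  have entry: "\<delta>$i$j = lam *\<^sub>R sgn (?x j - ?x i)" if "i < j" "?x i \<noteq> ?x j" for i j
    using K that unfolding kkt_def by (intro eq_scaleR_sgn_if_inner_eq) auto
  have "sgn (?x k - ?x l) = - sgn (?x l - ?x k)" by (metis minus_diff_eq sgn_minus)
  then show ?thesis
    using apart entry[of k l] entry[of l k] by (cases k l rule: linorder_cases) (auto simp: anti_def)
qed

section \<open>KKT vectors with prescribed blocks\<close>

lemma primal_point_split:
  "primal_point a w \<delta> k = a k + (\<Sum>l | c l = c k. w l *\<^sub>R anti \<delta> k l) + (\<Sum>l | c l \<noteq> c k. w l *\<^sub>R anti \<delta> k l)"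
  using sum.Int_Diff[of UNIV "\<lambda>l. w l *\<^sub>R anti \<delta> k l" "{l. c l = c k}"]
  by (simp add: primal_point_def dual_sum_def add.assoc set_diff_eq)

definition block_duals :: "('i::{finite,linorder} \<Rightarrow> 'b) \<Rightarrow> real \<Rightarrow> (('a::euclidean_space, 'i) vec, 'i) vec \<Rightarrow> (('a, 'i) vec, 'i) vec set" where
  "block_duals c lam \<delta>' = {\<delta>. (\<forall>k l. norm (\<delta>$k$l) \<le> lam) \<and> (\<forall>k l. \<not> k < l \<longrightarrow> \<delta>$k$l = 0) \<and>
      (\<forall>k l. k < l \<and> c k = c l \<longrightarrow> \<delta>$k$l = \<delta>'$k$l) \<and>
      (\<forall>k l k' l'. c k = c k' \<and> c l = c l' \<and> c k \<noteq> c l \<longrightarrow> anti \<delta> k l = anti \<delta> k' l')}"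

definition block_balanced :: "('i::{finite,linorder} \<Rightarrow> 'a::euclidean_space) \<Rightarrow> ('i \<Rightarrow> real) \<Rightarrow> ('i \<Rightarrow> 'b) \<Rightarrow> (('a, 'i) vec, 'i) vec \<Rightarrow> bool" where
  "block_balanced a w c \<delta>' \<longleftrightarrow> (\<forall>k k'. c k = c k' \<longrightarrow>
     a k + (\<Sum>l | c l = c k. w l *\<^sub>R anti \<delta>' k l) = a k' + (\<Sum>l | c l = c k'. w l *\<^sub>R anti \<delta>' k' l))"

lemma block_dualsI:
  assumes "\<And>k l. norm (\<delta>$k$l) \<le> lam" and "\<And>k l. \<not> k < l \<Longrightarrow> \<delta>$k$l = 0"
    and "\<And>k l. k < l \<Longrightarrow> c k = c l \<Longrightarrow> \<delta>$k$l = \<delta>'$k$l"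
    and "\<And>k l k' l'. c k = c k' \<Longrightarrow> c l = c l' \<Longrightarrow> c k \<noteq> c l \<Longrightarrow> anti \<delta> k l = anti \<delta> k' l'"
  shows "\<delta> \<in> block_duals c lam \<delta>'"
  unfolding block_duals_def mem_Collect_eq using assms by blast

lemma block_dualsD:
  assumes "\<delta> \<in> block_duals c lam \<delta>'"
  shows "norm (\<delta>$k$l) \<le> lam" and "\<not> k < l \<Longrightarrow> \<delta>$k$l = 0"
    and "k < l \<Longrightarrow> c k = c l \<Longrightarrow> \<delta>$k$l = \<delta>'$k$l"
    and "c k = c k' \<Longrightarrow> c l = c l' \<Longrightarrow> c k \<noteq> c l \<Longrightarrow> anti \<delta> k l = anti \<delta> k' l'"
  using assms unfolding block_duals_def mem_Collect_eq by blast+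

lemma closed_block_duals: "closed (block_duals c lam \<delta>')"
  unfolding block_duals_def
  by (intro closed_Collect_conj closed_Collect_all closed_Collect_imp open_Collect_const
      closed_Collect_le closed_Collect_eq continuous_intros)

lemma bounded_block_duals:
  fixes \<delta>' :: "(('a::euclidean_space, 'i::{finite,linorder}) vec, 'i) vec"
  shows "bounded (block_duals c lam \<delta>')"
proof -
  have "norm \<delta> \<le> (\<Sum>k\<in>(UNIV :: 'i set). \<Sum>l\<in>(UNIV :: 'i set). lam)"
    if "\<delta> \<in> block_duals c lam \<delta>'" for \<delta>
  proof -
    have "norm \<delta> \<le> (\<Sum>k\<in>UNIV. norm (\<delta>$k))" by (rule norm_le_sum_norm_vec_nth)
    also have "\<dots> \<le> (\<Sum>k\<in>UNIV. \<Sum>l\<in>UNIV. norm (\<delta>$k$l))" by (intro sum_mono norm_le_sum_norm_vec_nth)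
    also have "\<dots> \<le> (\<Sum>k\<in>(UNIV :: 'i set). \<Sum>l\<in>(UNIV :: 'i set). lam)"
      using block_dualsD(1)[OF that] by (intro sum_mono)
    finally show ?thesis .
  qed
  then show ?thesis unfolding bounded_iff by blast
qed

lemma convex_block_duals: "convex (block_duals c lam \<delta>')"
proof (rule convexI)
  fix \<delta>1 \<delta>2 and u v :: real
  assume \<delta>1: "\<delta>1 \<in> block_duals c lam \<delta>'" and \<delta>2: "\<delta>2 \<in> block_duals c lam \<delta>'"
    and uv: "0 \<le> u" "0 \<le> v" "u + v = 1"
  show "u *\<^sub>R \<delta>1 + v *\<^sub>R \<delta>2 \<in> block_duals c lam \<delta>'"
  proof (rule block_dualsI)
    fix k l
    have "norm (u *\<^sub>R \<delta>1$k$l + v *\<^sub>R \<delta>2$k$l) \<le> u * norm (\<delta>1$k$l) + v * norm (\<delta>2$k$l)"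
      using uv norm_triangle_ineq[of "u *\<^sub>R \<delta>1$k$l" "v *\<^sub>R \<delta>2$k$l"] by simp
    also have "\<dots> \<le> u * lam + v * lam"
      using block_dualsD(1)[OF \<delta>1] block_dualsD(1)[OF \<delta>2] uv by (intro add_mono mult_left_mono)
    finally show "norm ((u *\<^sub>R \<delta>1 + v *\<^sub>R \<delta>2)$k$l) \<le> lam" using uv by (simp add: distrib_right[symmetric])
    show "(u *\<^sub>R \<delta>1 + v *\<^sub>R \<delta>2)$k$l = 0" if "\<not> k < l"
      using block_dualsD(2)[OF \<delta>1 that] block_dualsD(2)[OF \<delta>2 that] by simp
    show "(u *\<^sub>R \<delta>1 + v *\<^sub>R \<delta>2)$k$l = \<delta>'$k$l" if "k < l" "c k = c l"
      using block_dualsD(3)[OF \<delta>1 that] block_dualsD(3)[OF \<delta>2 that] uv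
      by (simp add: scaleR_add_left[symmetric])
  next
    fix k l k' l' assume blocks: "c k = c k'" "c l = c l'" "c k \<noteq> c l"
    show "anti (u *\<^sub>R \<delta>1 + v *\<^sub>R \<delta>2) k l = anti (u *\<^sub>R \<delta>1 + v *\<^sub>R \<delta>2) k' l'"
      using block_dualsD(4)[OF \<delta>1 blocks] block_dualsD(4)[OF \<delta>2 blocks] by (simp add: anti_add anti_scaleR)
  qed
qed

lemma primal_point_block_constant:
  assumes \<delta>: "\<delta> \<in> block_duals c lam \<delta>'" and bal: "block_balanced a w c \<delta>'" and same: "c k = c k'"
  shows "primal_point a w \<delta> k = primal_point a w \<delta> k'"
proof -
  have inside: "anti \<delta> m l = anti \<delta>' m l" if "c l = c m" for m l
  proof (cases m l rule: linorder_cases)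
    case less
    then show ?thesis using block_dualsD(3)[OF \<delta> less] that by (simp add: anti_def)
  next
    case greater
    then show ?thesis using block_dualsD(3)[OF \<delta> greater] that by (auto simp: anti_def)
  qed simp
  have split: "primal_point a w \<delta> m
      = (a m + (\<Sum>l | c l = c m. w l *\<^sub>R anti \<delta>' m l)) + (\<Sum>l | c l \<noteq> c m. w l *\<^sub>R anti \<delta> m l)" for m
  proof -
    have "(\<Sum>l | c l = c m. w l *\<^sub>R anti \<delta> m l) = (\<Sum>l | c l = c m. w l *\<^sub>R anti \<delta>' m l)"
      using inside by (intro sum.cong) auto
    then show ?thesis using primal_point_split[of a w \<delta> m c] by simp
  qed
  have "(\<Sum>l | c l \<noteq> c k. w l *\<^sub>R anti \<delta> k l) = (\<Sum>l | c l \<noteq> c k'. w l *\<^sub>R anti \<delta> k' l)"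
  proof (rule sum.cong)
    fix l assume "l \<in> {l. c l \<noteq> c k'}"
    then show "w l *\<^sub>R anti \<delta> k l = w l *\<^sub>R anti \<delta> k' l"
      using block_dualsD(4)[OF \<delta> same refl] same by simp
  qed (use same in simp)
  moreover have "a k + (\<Sum>l | c l = c k. w l *\<^sub>R anti \<delta>' k l) = a k' + (\<Sum>l | c l = c k'. w l *\<^sub>R anti \<delta>' k' l)"
    using bal same unfolding block_balanced_def by blast
  ultimately show ?thesis by (simp only: split)
qed

lemma block_balanced_of_kkt:
  assumes K: "kkt a w lam \<delta>"
  shows "block_balanced a w (primal_point a w \<delta>) \<delta>"
proof -
  let ?x = "primal_point a w \<delta>"
  define outside where "outside p = (\<Sum>l | ?x l \<noteq> p. w l *\<^sub>R (lam *\<^sub>R sgn (?x l - p)))" for p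
  have inside: "a k + (\<Sum>l | ?x l = ?x k. w l *\<^sub>R anti \<delta> k l) = ?x k - outside (?x k)" for k
    using primal_point_split[of a w \<delta> k ?x] anti_eq_of_kkt[OF K] by (simp add: outside_def algebra_simps)
  show ?thesis
    unfolding block_balanced_def
  proof (intro allI impI)
    fix k k' assume "?x k = ?x k'"
    then show "a k + (\<Sum>l | ?x l = ?x k. w l *\<^sub>R anti \<delta> k l) = a k' + (\<Sum>l | ?x l = ?x k'. w l *\<^sub>R anti \<delta> k' l)"
      unfolding inside by (simp only:)
  qed
qed

lemma aligned_dual_in_block_duals:
  assumes \<delta>: "\<delta> \<in> block_duals c lam \<delta>'" and lam: "0 \<le> lam" and const: "\<And>k k'. c k = c k' \<Longrightarrow> x k = x k'"
  shows "aligned_dual lam x \<delta> \<in> block_duals c lam \<delta>'"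
proof (rule block_dualsI)
  fix k l
  show "norm (aligned_dual lam x \<delta> $k$l) \<le> lam"
    using block_dualsD(1)[OF \<delta>] lam by (simp add: aligned_dual_def norm_sgn)
  show "aligned_dual lam x \<delta> $k$l = 0" if "\<not> k < l"
    using block_dualsD(2)[OF \<delta> that] that by (simp add: aligned_dual_def)
  show "aligned_dual lam x \<delta> $k$l = \<delta>'$k$l" if "k < l" "c k = c l"
    using block_dualsD(3)[OF \<delta> that] const[OF that(2)] by (simp add: aligned_dual_def)
next
  fix k l k' l' assume blocks: "c k = c k'" "c l = c l'" "c k \<noteq> c l"
  show "anti (aligned_dual lam x \<delta>) k l = anti (aligned_dual lam x \<delta>) k' l'"
    using block_dualsD(4)[OF \<delta> blocks] const[OF blocks(1)] const[OF blocks(2)]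
    by (simp add: anti_aligned_dual)
qed

lemma continuous_on_dual_fun: "continuous_on S (dual_fun a w)"
  unfolding dual_fun_def dsocp_obj_def dual_gamma_def dual_sum_def
  by (intro continuous_intros) simp_all

lemma kkt_exists_in_block_duals:
  fixes a :: "'i::{finite,linorder} \<Rightarrow> 'a::euclidean_space" and c :: "'i \<Rightarrow> 'b"
  assumes w: "\<forall>i. w i > 0" and lam: "0 \<le> lam"
    and bound: "\<forall>k l. k < l \<and> c k = c l \<longrightarrow> norm (\<delta>'$k$l) \<le> lam"
    and bal: "block_balanced a w c \<delta>'"
  shows "\<exists>\<delta>\<in>block_duals c lam \<delta>'. kkt a w lam \<delta>"
proof -
  let ?K = "block_duals c lam \<delta>'"
  have "(\<chi> k l. if k < l \<and> c k = c l then \<delta>'$k$l else 0) \<in> ?K"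
    using bound lam by (intro block_dualsI) (auto simp: anti_def)
  moreover have "compact ?K"
    unfolding compact_eq_bounded_closed using closed_block_duals bounded_block_duals by blast
  ultimately obtain \<delta> where \<delta>: "\<delta> \<in> ?K" and max: "\<forall>\<delta>2\<in>?K. dual_fun a w \<delta>2 \<le> dual_fun a w \<delta>"
    using continuous_attains_sup[OF _ _ continuous_on_dual_fun] by blast
  let ?x = "primal_point a w \<delta>"
  have "aligned_dual lam ?x \<delta> \<in> ?K"
    using aligned_dual_in_block_duals[OF \<delta> lam] primal_point_block_constant[OF \<delta> bal] by blast
  then have "\<delta> + t *\<^sub>R (aligned_dual lam ?x \<delta> - \<delta>) \<in> ?K" if "0 \<le> t" "t \<le> 1" for t
    using convexD_alt[OF convex_block_duals \<delta> _ that] by (simp add: algebra_simps)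
  then have "(\<Sum>i\<in>UNIV. \<Sum>j\<in>{j. i < j}.
      w i * w j * ((aligned_dual lam ?x \<delta> - \<delta>)$i$j \<bullet> (?x j - ?x i))) \<le> 0"
    using max by (intro dual_fun_first_order) auto
  moreover have "\<forall>i j. i < j \<longrightarrow> norm (\<delta>$i$j) \<le> lam" using block_dualsD(1)[OF \<delta>] by blast
  ultimately show ?thesis using kkt_of_first_order[OF w] \<delta> by blast
qed

section \<open>Optimal duals at a non-fusion value\<close>

text \<open>With singleton blocks nothing is prescribed.\<close>
lemma kkt_exists:
  fixes a :: "'i::{finite,linorder} \<Rightarrow> 'a::euclidean_space"
  assumes "\<forall>i. w i > 0" and "0 \<le> lam"
  shows "\<exists>\<delta>. kkt a w lam \<delta>"
  using kkt_exists_in_block_duals[of w lam "\<lambda>k. k" 0 a] assms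
  by (auto simp: block_balanced_def)

lemma dsocp_delta_set_of_kkt:
  assumes "\<forall>i. w i > 0" and "kkt a w lam \<delta>" and "\<forall>k l. \<not> k < l \<longrightarrow> \<delta>$k$l = 0"
  shows "\<delta> \<in> dsocp_delta_set a w lam"
  unfolding dsocp_delta_set_def using assms(3) dsocp_optimal_of_kkt[OF assms(1,2)] by blast

text \<open>Keeping the entries of an optimal dual of \<open>\<lambda>' < \<lambda>\<close> inside the clusters of \<open>\<lambda>'\<close> yields
  an optimal dual of \<open>\<lambda>\<close> whose entries there are bounded by \<open>\<lambda>'\<close>.\<close>
lemma dsocp_delta_set_norm_lt:
  fixes a :: "'i::{finite,linorder} \<Rightarrow> 'a::euclidean_space"
  assumes w: "\<forall>i. w i > 0" and lam: "lam > 0" and not_fusion: "\<not> fusion_value a w lam"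
    and ij: "i < j" and fused: "xstar a w lam i = xstar a w lam j"
  shows "\<exists>\<delta>\<in>dsocp_delta_set a w lam. norm (\<delta>$i$j) < lam"
proof -
  have "i \<noteq> j" using ij by simp
  then obtain lam' where lam': "0 < lam'" "lam' < lam" and fused': "xstar a w lam' i = xstar a w lam' j"
    using not_fusion lam fused unfolding fusion_value_def by blast
  obtain \<delta>0 :: "(('a, 'i) vec, 'i) vec" where K0: "kkt a w lam' \<delta>0"
    using kkt_exists[OF w less_imp_le[OF lam'(1)]] by blast
  let ?x0 = "primal_point a w \<delta>0"
  have bound0: "norm (\<delta>0$k$l) < lam" if "k < l" for k l
    using K0 that lam'(2) unfolding kkt_def by (meson le_less_trans)
  then have "\<forall>k l. k < l \<and> ?x0 k = ?x0 l \<longrightarrow> norm (\<delta>0$k$l) \<le> lam" by (simp add: less_imp_le)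
  then obtain \<delta> where \<delta>: "\<delta> \<in> block_duals ?x0 lam \<delta>0" and K: "kkt a w lam \<delta>"
    using kkt_exists_in_block_duals[OF w less_imp_le[OF lam] _ block_balanced_of_kkt[OF K0]] by blast
  have "?x0 i = ?x0 j" using fused' xstar_eq_primal_point[OF w K0] by simp
  then have "norm (\<delta>$i$j) < lam" using block_dualsD(3)[OF \<delta> ij] bound0[OF ij] by simp
  moreover have "\<delta> \<in> dsocp_delta_set a w lam"
    using block_dualsD(2)[OF \<delta>] by (intro dsocp_delta_set_of_kkt[OF w K]) blast
  ultimately show ?thesis by blast
qed

lemma norm_le_of_mem_dsocp_delta_set:
  "\<delta> \<in> dsocp_delta_set a w lam \<Longrightarrow> i < j \<Longrightarrow> norm (\<delta>$i$j) \<le> lam"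
  by (auto simp: dsocp_delta_set_def dsocp_optimal_def dsocp_feasible_def)

theorem lemma7p2:
  fixes a :: "'i::{finite,linorder} \<Rightarrow> 'a::euclidean_space"
    and w :: "'i \<Rightarrow> real"
    and lam p' \<mu> :: real
    and \<delta>a :: "(('a, 'i) vec, 'i) vec"
  assumes "CARD('i) \<ge> 2"
    and "\<forall>i. w i > 0"
    and "lam > 0"
    and "\<not> fusion_value a w lam"
    and "\<delta>a \<in> rel_interior (dsocp_delta_set a w lam)"
    and "p' \<ge> 0" and "\<mu> \<ge> 0"
  shows "(cluster_pairs a w lam \<noteq> {} \<longrightarrow> cluster_gap a w lam \<delta>a > 0) \<and>
         (\<forall>\<delta> :: (('a, 'i) vec, 'i) vec.
            (\<forall>i j. i < j \<longrightarrow> norm (\<delta>$i$j - \<delta>a$i$j) \<le> p' * \<mu>) \<longrightarrow>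
            (\<forall>i j. i < j \<and> same_cluster a w lam i j \<longrightarrow>
                norm (\<delta>$i$j) \<le> lam - cluster_gap a w lam \<delta>a + p' * \<mu>))"
proof -
  let ?S = "dsocp_delta_set a w lam" and ?P = "cluster_pairs a w lam"
  have strict: "norm (\<delta>a$i$j) < lam" if "(i, j) \<in> ?P" for i j
  proof -
    have ij: "i < j" and fused: "xstar a w lam i = xstar a w lam j"
      using that by (simp_all add: cluster_pairs_def same_cluster_def)
    obtain \<delta> where "\<delta> \<in> ?S" and "norm (\<delta>$i$j) < lam"
      using dsocp_delta_set_norm_lt[OF assms(2-4) ij fused] by blast
    moreover have "\<forall>z\<in>?S. norm (z$i$j) \<le> lam"
      using ij norm_le_of_mem_dsocp_delta_set by blast
    ultimately show ?thesis
      using convex_on_lt_in_rel_interior[OF convex_on_norm_vec_nth_nth _ _ _ assms(5)] by blast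
  qed
  have gap_le: "cluster_gap a w lam \<delta>a \<le> lam - norm (\<delta>a$i$j)" if "(i, j) \<in> ?P" for i j
    unfolding cluster_gap_def using that by (intro Min_le) force+
  show ?thesis
  proof (intro conjI impI allI)
    assume "?P \<noteq> {}"
    then show "0 < cluster_gap a w lam \<delta>a"
      unfolding cluster_gap_def using strict by (subst Min_gr_iff) auto
  next
    fix \<delta> :: "(('a, 'i) vec, 'i) vec" and i j
    assume close: "\<forall>i j. i < j \<longrightarrow> norm (\<delta>$i$j - \<delta>a$i$j) \<le> p' * \<mu>"
      and pair: "i < j \<and> same_cluster a w lam i j"
    then have "norm (\<delta>$i$j - \<delta>a$i$j) \<le> p' * \<mu>" and "(i, j) \<in> ?P"
      by (auto simp: cluster_pairs_def)
    then show "norm (\<delta>$i$j) \<le> lam - cluster_gap a w lam \<delta>a + p' * \<mu>"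
      using gap_le norm_triangle_sub[of "\<delta>$i$j" "\<delta>a$i$j"] by fastforce
  qed
qed

end
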